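(* Let $X$ be a prelength space and $Y$ a metric space. For any $f\in\mathfrak{C}(X\to Y)$ and $x\in\mathfrak{C}(X)$, the function $\mathrm{ap}(f)(x)=\lambda\varepsilon.\,\mathrm{map}(f(\tfrac{\varepsilon}{2}))(x)(\tfrac{\varepsilon}{2})$ is a regular function over $Y$.
   Context: $\mathbb{Q}^+$ denotes the strictly positive rationals; all $\varepsilon,\delta$ (with indices) range over $\mathbb{Q}^+$. A metric space is a triple $(X,\asymp,B)$ where $\asymp$ is an equivalence relation on $X$ and $B$ assigns to each $\varepsilon\in\mathbb{Q}^+$ a binary relation $B_\varepsilon$ on $X$ respecting $\asymp$, such that: (1) each $B_\varepsilon$ is reflexive; (2) each $B_\varepsilon$ is symmetric; (3) if $B_{\varepsilon_1}(a,b)$ and $B_{\varepsilon_2}(b,c)$ then $B_{\varepsilon_1+\varepsilon_2}(a,c)$; (4) if $B_{\varepsilon+\delta}(a,b)$ for all $\delta$, then $B_\varepsilon(a,b)$; (5) if $B_\varepsilon(a,b)$ for all $\varepsilon$, then $a\asymp b$. A prelength space is a metric space such that for all $a,b,\varepsilon,\delta_1,\delta_2$ with $\varepsilon<\delta_1+\delta_2$ and $B_\varepsilon(a,b)$ there exists $c$ with $B_{\delta_1}(a,c)$ and $B_{\delta_2}(c,b)$. A regular function over a metric space $W$ is a function $x:\mathbb{Q}^+\to W$ such that $B_{\varepsilon_1+\varepsilon_2}(x(\varepsilon_1),x(\varepsilon_2))$ for all $\varepsilon_1,\varepsilon_2$; $\mathfrak{C}(W)$ is the metric space of regular functions with $x\asymp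 y$ iff $B_{2\varepsilon}(x(\varepsilon),y(\varepsilon))$ for all $\varepsilon$ and $B'_\varepsilon(x,y)$ iff $B_{\varepsilon+\delta_1+\delta_2}(x(\delta_1),y(\delta_2))$ for all $\delta_1,\delta_2$. A uniformly continuous function $g:X\to Y$ is a pair of a function and a modulus $\mu_g$ with $B^X_{\mu_g(\varepsilon)}(x_1,x_2)\Rightarrow B^Y_\varepsilon(g(x_1),g(x_2))$. $X\to Y$ is the metric space of uniformly continuous functions with $B_\varepsilon(g,h)$ iff $B^Y_\varepsilon(g(a),h(a))$ for all $a$, and $g\asymp h$ iff $g(a)\asymp h(a)$ for all $a$. $\mathrm{map}(g)(x)=\lambda\varepsilon.\,g(x(\mu_g(\varepsilon)))$. *)

theory Defs
  imports Complex_Main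
begin

text \<open>Only positive rationals are meaningful indices.\<close>

definition metric_sp :: "'a set \<Rightarrow> ('a \<Rightarrow> 'a \<Rightarrow> bool) \<Rightarrow> (rat \<Rightarrow> 'a \<Rightarrow> 'a \<Rightarrow> bool) \<Rightarrow> bool" where
  "metric_sp S eq B \<longleftrightarrow>
     (\<forall>a\<in>S. eq a a) \<and>
     (\<forall>a\<in>S. \<forall>b\<in>S. eq a b \<longrightarrow> eq b a) \<and>
     (\<forall>a\<in>S. \<forall>b\<in>S. \<forall>c\<in>S. eq a b \<longrightarrow> eq b c \<longrightarrow> eq a c) \<and>
     (\<forall>e>0. \<forall>a\<in>S. \<forall>b\<in>S. \<forall>a'\<in>S. \<forall>b'\<in>S.
        eq a a' \<longrightarrow> eq b b' \<longrightarrow> B e a b \<longrightarrow> B e a' b') \<and>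
     (\<forall>e>0. \<forall>a\<in>S. B e a a) \<and>
     (\<forall>e>0. \<forall>a\<in>S. \<forall>b\<in>S. B e a b \<longrightarrow> B e b a) \<and>
     (\<forall>e1>0. \<forall>e2>0. \<forall>a\<in>S. \<forall>b\<in>S. \<forall>c\<in>S.
        B e1 a b \<longrightarrow> B e2 b c \<longrightarrow> B (e1 + e2) a c) \<and>
     (\<forall>e>0. \<forall>a\<in>S. \<forall>b\<in>S. (\<forall>d>0. B (e + d) a b) \<longrightarrow> B e a b) \<and>
     (\<forall>a\<in>S. \<forall>b\<in>S. (\<forall>e>0. B e a b) \<longrightarrow> eq a b)"

definition prelength_sp :: "'a set \<Rightarrow> ('a \<Rightarrow> 'a \<Rightarrow> bool) \<Rightarrow> (rat \<Rightarrow> 'a \<Rightarrow> 'a \<Rightarrow> bool) \<Rightarrow> bool" where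
  "prelength_sp S eq B \<longleftrightarrow> metric_sp S eq B \<and>
     (\<forall>a\<in>S. \<forall>b\<in>S. \<forall>e>0. \<forall>d1>0. \<forall>d2>0. e < d1 + d2 \<longrightarrow> B e a b \<longrightarrow>
        (\<exists>c\<in>S. B d1 a c \<and> B d2 c b))"

definition regular :: "'a set \<Rightarrow> (rat \<Rightarrow> 'a \<Rightarrow> 'a \<Rightarrow> bool) \<Rightarrow> (rat \<Rightarrow> 'a) \<Rightarrow> bool" where
  "regular S B x \<longleftrightarrow> (\<forall>e>0. x e \<in> S) \<and>
     (\<forall>e1>0. \<forall>e2>0. B (e1 + e2) (x e1) (x e2))"

definition uc_set :: "'a set \<Rightarrow> (rat \<Rightarrow> 'a \<Rightarrow> 'a \<Rightarrow> bool) \<Rightarrow> 'b set \<Rightarrow> (rat \<Rightarrow> 'b \<Rightarrow> 'b \<Rightarrow> bool)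
    \<Rightarrow> (('a \<Rightarrow> 'b) \<times> (rat \<Rightarrow> rat)) set" where
  "uc_set SX BX SY BY = {(g, mu).
      (\<forall>a\<in>SX. g a \<in> SY) \<and> (\<forall>e>0. mu e > 0) \<and>
      (\<forall>e>0. \<forall>a1\<in>SX. \<forall>a2\<in>SX. BX (mu e) a1 a2 \<longrightarrow> BY e (g a1) (g a2))}"

definition fun_eq :: "'a set \<Rightarrow> ('b \<Rightarrow> 'b \<Rightarrow> bool)
    \<Rightarrow> ('a \<Rightarrow> 'b) \<times> (rat \<Rightarrow> rat) \<Rightarrow> ('a \<Rightarrow> 'b) \<times> (rat \<Rightarrow> rat) \<Rightarrow> bool" where
  "fun_eq SX eqY g h \<longleftrightarrow> (\<forall>a\<in>SX. eqY (fst g a) (fst h a))"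

definition fun_ball :: "'a set \<Rightarrow> (rat \<Rightarrow> 'b \<Rightarrow> 'b \<Rightarrow> bool)
    \<Rightarrow> rat \<Rightarrow> ('a \<Rightarrow> 'b) \<times> (rat \<Rightarrow> rat) \<Rightarrow> ('a \<Rightarrow> 'b) \<times> (rat \<Rightarrow> rat) \<Rightarrow> bool" where
  "fun_ball SX BY e g h \<longleftrightarrow> (\<forall>a\<in>SX. BY e (fst g a) (fst h a))"

definition mapC :: "('a \<Rightarrow> 'b) \<times> (rat \<Rightarrow> rat) \<Rightarrow> (rat \<Rightarrow> 'a) \<Rightarrow> rat \<Rightarrow> 'b" where
  "mapC g x = (\<lambda>e. fst g (x (snd g e)))"

definition apC :: "(rat \<Rightarrow> ('a \<Rightarrow> 'b) \<times> (rat \<Rightarrow> rat)) \<Rightarrow> (rat \<Rightarrow> 'a) \<Rightarrow> rat \<Rightarrow> 'b" where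
  "apC f x = (\<lambda>e. mapC (f (e / 2)) x (e / 2))"

end

theory Submission
  imports Defs
begin

text \<open>Let g = f(e1/2) and h = f(e2/2), with moduli mu and nu. Regularity of f makes g and h
uniformly (e1 + e2)/2-close, and regularity of x makes the two sample points a and b
(mu(e1/2) + nu(e2/2))-close. Since X is a prelength space, at the cost of a slack nu(d) the
points a and b can be joined through intermediate points c and c' by a mu(e1/2)-step, a
nu(d)-step and a nu(e2/2)-step. Then
g a, g c, h c, h c', h b are successively e1/2-, (e1 + e2)/2-, d- and e2/2-close, and
closedness of the balls of Y removes the slack d.\<close>

lemma metric_sp_triangle:
  assumes "metric_sp S eq B" "e1 > 0" "e2 > 0" "a \<in> S" "b \<in> S" "c \<in> S"
    and "B e1 a b" "B e2 b c"
  shows "B (e1 + e2) a c"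
  using assms unfolding metric_sp_def by blast

lemma metric_sp_ball_closed:
  assumes "metric_sp S eq B" "e > 0" "a \<in> S" "b \<in> S"
    and "\<And>d. d > 0 \<Longrightarrow> B (e + d) a b"
  shows "B e a b"
  using assms unfolding metric_sp_def by blast

lemma prelength_sp_split:
  assumes "prelength_sp S eq B" "a \<in> S" "b \<in> S" "e > 0" "d1 > 0" "d2 > 0"
    and "e < d1 + d2" "B e a b"
  obtains c where "c \<in> S" "B d1 a c" "B d2 c b"
  using assms unfolding prelength_sp_def by blast

lemma prelength_sp_split3:
  assumes pre: "prelength_sp S eq B" and ab: "a \<in> S" "b \<in> S"
    and pos: "e > 0" "d1 > 0" "d2 > 0" "d3 > 0"
    and lt: "e < d1 + d2 + d3" and ball: "B e a b"
  obtains c c' where "c \<in> S" "c' \<in> S" "B d1 a c" "B d2 c c'" "B d3 c' b"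
proof -
  define t where "t = max ((e - d1 + d2 + d3) / 2) ((d2 + d3) / 2)"
  have t: "t > 0" "e < d1 + t" "t < d2 + d3"
    using pos lt unfolding t_def by (auto simp: max_def field_simps)
  obtain c where c: "c \<in> S" "B d1 a c" "B t c b"
    using prelength_sp_split[OF pre ab pos(1,2) t(1,2) ball] .
  obtain c' where "c' \<in> S" "B d2 c c'" "B d3 c' b"
    using prelength_sp_split[OF pre c(1) ab(2) t(1) pos(3,4) t(3) c(3)] .
  with c that show ?thesis by blast
qed

lemma uc_setD:
  assumes "g \<in> uc_set SX BX SY BY"
  shows "\<And>a. a \<in> SX \<Longrightarrow> fst g a \<in> SY"
    and "\<And>e. e > 0 \<Longrightarrow> snd g e > 0"
    and "\<And>e a1 a2. e > 0 \<Longrightarrow> a1 \<in> SX \<Longrightarrow> a2 \<in> SX \<Longrightarrow> BX (snd g e) a1 a2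
           \<Longrightarrow> BY e (fst g a1) (fst g a2)"
  using assms unfolding uc_set_def by auto

lemma uc_set_fun_ball_apply:
  assumes pre: "prelength_sp SX eqX BX" and Y: "metric_sp SY eqY BY"
    and g: "g \<in> uc_set SX BX SY BY" and h: "h \<in> uc_set SX BX SY BY"
    and gh: "fun_ball SX BY r g h" and pos: "r > 0" "e1 > 0" "e2 > 0"
    and ab: "a \<in> SX" "b \<in> SX" "BX (snd g e1 + snd h e2) a b"
  shows "BY (e1 + r + e2) (fst g a) (fst h b)"
proof (rule metric_sp_ball_closed[OF Y])
  fix d :: rat assume d: "d > 0"
  have mod_pos: "snd g e1 > 0" "snd h d > 0" "snd h e2 > 0"
    using uc_setD(2)[OF g] uc_setD(2)[OF h] pos d by auto
  then obtain c c' where c: "c \<in> SX" "c' \<in> SX"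
      "BX (snd g e1) a c" "BX (snd h d) c c'" "BX (snd h e2) c' b"
    using prelength_sp_split3[OF pre ab(1,2) _ mod_pos _ ab(3)] by auto
  have "BY e1 (fst g a) (fst g c)"
    using uc_setD(3)[OF g] pos ab c by blast
  moreover have "BY r (fst g c) (fst h c)"
    using gh c unfolding fun_ball_def by blast
  moreover have "BY d (fst h c) (fst h c')"
    using uc_setD(3)[OF h] d c by blast
  moreover have "BY e2 (fst h c') (fst h b)"
    using uc_setD(3)[OF h] pos ab c by blast
  moreover have "fst g a \<in> SY" "fst g c \<in> SY" "fst h c \<in> SY" "fst h c' \<in> SY" "fst h b \<in> SY"
    using uc_setD(1)[OF g] uc_setD(1)[OF h] ab c by auto
  ultimately have "BY (e1 + r + d + e2) (fst g a) (fst h b)"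
    using metric_sp_triangle[OF Y] pos d by (meson add_pos_pos)
  then show "BY (e1 + r + e2 + d) (fst g a) (fst h b)"
    by (simp add: algebra_simps)
qed (use pos uc_setD(1)[OF g] uc_setD(1)[OF h] ab in auto)

theorem theorem25:
  fixes SX :: "'a set" and eqX :: "'a \<Rightarrow> 'a \<Rightarrow> bool" and BX :: "rat \<Rightarrow> 'a \<Rightarrow> 'a \<Rightarrow> bool"
    and SY :: "'b set" and eqY :: "'b \<Rightarrow> 'b \<Rightarrow> bool" and BY :: "rat \<Rightarrow> 'b \<Rightarrow> 'b \<Rightarrow> bool"
    and f :: "rat \<Rightarrow> ('a \<Rightarrow> 'b) \<times> (rat \<Rightarrow> rat)" and x :: "rat \<Rightarrow> 'a"
  assumes "prelength_sp SX eqX BX"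
    and "metric_sp SY eqY BY"
    and "regular (uc_set SX BX SY BY) (fun_ball SX BY) f"
    and "regular SX BX x"
  shows "regular SY BY (apC f x)"
proof -
  have f_uc: "\<And>e. e > 0 \<Longrightarrow> f (e / 2) \<in> uc_set SX BX SY BY"
    using assms(3) unfolding regular_def by simp
  have x_pt: "\<And>e. e > 0 \<Longrightarrow> x (snd (f (e / 2)) (e / 2)) \<in> SX"
    using assms(4) uc_setD(2)[OF f_uc] unfolding regular_def by simp
  have "BY (e1 + e2) (apC f x e1) (apC f x e2)" if e: "e1 > 0" "e2 > 0" for e1 e2
  proof -
    have "fun_ball SX BY (e1 / 2 + e2 / 2) (f (e1 / 2)) (f (e2 / 2))"
      using assms(3) e unfolding regular_def by simp
    moreover have "BX (snd (f (e1 / 2)) (e1 / 2) + snd (f (e2 / 2)) (e2 / 2))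
        (x (snd (f (e1 / 2)) (e1 / 2))) (x (snd (f (e2 / 2)) (e2 / 2)))"
      using assms(4) uc_setD(2)[OF f_uc] e unfolding regular_def by simp
    ultimately have "BY (e1 / 2 + (e1 / 2 + e2 / 2) + e2 / 2) (apC f x e1) (apC f x e2)"
      unfolding apC_def mapC_def
      by (intro uc_set_fun_ball_apply[OF assms(1,2) f_uc f_uc]) (use e x_pt in auto)
    moreover have "e1 / 2 + (e1 / 2 + e2 / 2) + e2 / 2 = e1 + e2"
      by simp
    ultimately show ?thesis by metis
  qed
  moreover have "apC f x e \<in> SY" if "e > 0" for e
    using uc_setD(1)[OF f_uc x_pt] that unfolding apC_def mapC_def by simp
  ultimately show ?thesis unfolding regular_def by blast
qed

end
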